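(* Let two users be at $(x_1,y_1,0),(x_2,y_2,0)$ with $-\frac{D_{\rm L}}{2}\le x_m\le\frac{D_{\rm L}}{2}$, ordered so that $y_1^2\le y_2^2$, let $d>0$, $\eta>0$, $\sigma^2>0$, and for an antenna at $(x,0,d)$ let $\delta_m(x)=(x-x_m)^2+y_m^2+d^2$. Define $$R_2^{\rm NOMA}=\log\left(1+\frac{\eta P_2}{\eta P_1+\sigma^2\delta_2(x)}\right),\quad R_0^{\rm NOMA}=\log\left(1+\frac{\eta P_2}{\eta P_1+\sigma^2\delta_1(x)}\right),\quad R_1^{\rm NOMA}=\log\left(1+\frac{\eta P_1}{\sigma^2\delta_1(x)}\right),$$ and consider $$\min_{P_1,P_2\ge0,\ x}\ P_1+P_2\quad\text{s.t.}\quad R_m^{\rm NOMA}\ge R\ (m=0,1,2),\quad -\frac{D_{\rm L}}{2}\le x\le\frac{D_{\rm L}}{2}.$$ If $R\ge\frac12$, then an optimal solution is $$x^*=\frac{x_2}{e^R+1}+\frac{e^Rx_1}{e^R+1},\quad P_1^*=\tilde\epsilon(x^*-x_1)^2+\tilde\tau_1,\quad P_2^*=\frac{\tilde\epsilon\eta}{\sigma^2}P_1^*+\tilde\epsilon(x^*-x_2)^2+\tilde\tau_2,$$ where $\tilde\epsilon=\frac{\sigma^2}{\eta}(e^R-1)$ and $\tilde\tau_m=\tilde\epsilon(y_m^2+d^2)$.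
   Context: Two-user power-domain NOMA with a single pinching antenna at $(x,0,d)$ on a waveguide of height $d$; user 1 performs successive interference cancellation: it first decodes user 2's signal (rate $R_0^{\rm NOMA}$), then its own (rate $R_1^{\rm NOMA}$); user 2 decodes its own signal treating user 1's as interference (rate $R_2^{\rm NOMA}$). $P_m$ is the power for user $m$'s signal, $R$ is the target rate, $\log$ is natural. *)

theory Defs
  imports Complex_Main
begin

definition delta :: "real \<Rightarrow> real \<Rightarrow> real \<Rightarrow> real \<Rightarrow> real" where
  "delta d xm ym x = (x - xm)^2 + ym^2 + d^2"

definition R2_NOMA :: "real \<Rightarrow> real \<Rightarrow> real \<Rightarrow> real \<Rightarrow> real \<Rightarrow> real \<Rightarrow> real \<Rightarrow> real \<Rightarrow> real" where
  "R2_NOMA eta sigma2 d x2 y2 P1 P2 x =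
     ln (1 + eta * P2 / (eta * P1 + sigma2 * delta d x2 y2 x))"

definition R0_NOMA :: "real \<Rightarrow> real \<Rightarrow> real \<Rightarrow> real \<Rightarrow> real \<Rightarrow> real \<Rightarrow> real \<Rightarrow> real \<Rightarrow> real" where
  "R0_NOMA eta sigma2 d x1 y1 P1 P2 x =
     ln (1 + eta * P2 / (eta * P1 + sigma2 * delta d x1 y1 x))"

definition R1_NOMA :: "real \<Rightarrow> real \<Rightarrow> real \<Rightarrow> real \<Rightarrow> real \<Rightarrow> real \<Rightarrow> real \<Rightarrow> real" where
  "R1_NOMA eta sigma2 d x1 y1 P1 x =
     ln (1 + eta * P1 / (sigma2 * delta d x1 y1 x))"

definition noma_feasible ::
  "real \<Rightarrow> real \<Rightarrow> real \<Rightarrow> real \<Rightarrow> real \<Rightarrow> real \<Rightarrow> real \<Rightarrow> real \<Rightarrow> real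
   \<Rightarrow> real \<Rightarrow> real \<Rightarrow> real \<Rightarrow> bool" where
  "noma_feasible eta sigma2 d DL R x1 y1 x2 y2 P1 P2 x \<longleftrightarrow>
     P1 \<ge> 0 \<and> P2 \<ge> 0 \<and>
     R0_NOMA eta sigma2 d x1 y1 P1 P2 x \<ge> R \<and>
     R1_NOMA eta sigma2 d x1 y1 P1 x \<ge> R \<and>
     R2_NOMA eta sigma2 d x2 y2 P1 P2 x \<ge> R \<and>
     - DL / 2 \<le> x \<and> x \<le> DL / 2"

definition noma_optimal ::
  "real \<Rightarrow> real \<Rightarrow> real \<Rightarrow> real \<Rightarrow> real \<Rightarrow> real \<Rightarrow> real \<Rightarrow> real \<Rightarrow> real
   \<Rightarrow> real \<Rightarrow> real \<Rightarrow> real \<Rightarrow> bool" where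
  "noma_optimal eta sigma2 d DL R x1 y1 x2 y2 P1 P2 x \<longleftrightarrow>
     noma_feasible eta sigma2 d DL R x1 y1 x2 y2 P1 P2 x \<and>
     (\<forall>Q1 Q2 z. noma_feasible eta sigma2 d DL R x1 y1 x2 y2 Q1 Q2 z \<longrightarrow> P1 + P2 \<le> Q1 + Q2)"

end

theory Submission
  imports Defs
begin

text \<open>With \<open>a = exp R - 1\<close>, each rate constraint \<open>R \<le> ln (1 + S / I)\<close> is the linear constraint
  \<open>a * I \<le> S\<close>. Eliminating \<open>P\<^sub>1\<close> from the constraints of users 1 and 2 gives
  \<open>\<eta> (P\<^sub>1 + P\<^sub>2) \<ge> \<sigma>\<^sup>2 a (e\<^sup>R \<delta>\<^sub>1(x) + \<delta>\<^sub>2(x))\<close>, with equality when both constraints are tight.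
  The right-hand side is a weighted sum of squared distances from the antenna to the two users,
  minimised at their weighted mean \<open>x\<^sup>*\<close>. Since \<open>x\<^sup>*\<close> lies closer to user 1, which is also
  closer to the waveguide, \<open>\<delta>\<^sub>1(x\<^sup>*) \<le> \<delta>\<^sub>2(x\<^sup>*)\<close>, so the SIC constraint \<open>R\<^sub>0 \<ge> R\<close> then holds
  automatically.\<close>

lemma ln_one_plus_divide_ge_iff:
  fixes R p c :: real
  assumes "c > 0" and "p \<ge> 0"
  shows "R \<le> ln (1 + p / c) \<longleftrightarrow> (exp R - 1) * c \<le> p"
proof -
  have "0 < 1 + p / c" using assms by (simp add: add_pos_nonneg)
  then have "R \<le> ln (1 + p / c) \<longleftrightarrow> exp R - 1 \<le> p / c" by (auto simp: ln_ge_iff)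
  also have "\<dots> \<longleftrightarrow> (exp R - 1) * c \<le> p" using assms(1) by (simp add: pos_le_divide_eq)
  finally show ?thesis .
qed

lemma delta_pos: "d > 0 \<Longrightarrow> delta d xm ym x > 0"
  unfolding delta_def by (simp add: add_nonneg_pos)

lemma noma_feasible_iff:
  assumes "d > 0" and "eta > 0" and "sigma2 > 0"
  shows "noma_feasible eta sigma2 d DL R x1 y1 x2 y2 P1 P2 x \<longleftrightarrow>
    P1 \<ge> 0 \<and> P2 \<ge> 0 \<and>
    (exp R - 1) * (eta * P1 + sigma2 * delta d x1 y1 x) \<le> eta * P2 \<and>
    (exp R - 1) * (sigma2 * delta d x1 y1 x) \<le> eta * P1 \<and>
    (exp R - 1) * (eta * P1 + sigma2 * delta d x2 y2 x) \<le> eta * P2 \<and>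
    - DL / 2 \<le> x \<and> x \<le> DL / 2"
proof (cases "P1 \<ge> 0 \<and> P2 \<ge> 0")
  case True
  have noise: "sigma2 * delta d xm ym x > 0" for xm ym
    using assms delta_pos by simp
  then have "eta * P1 + sigma2 * delta d xm ym x > 0" for xm ym
    using assms True by (simp add: add_nonneg_pos)
  with noise True assms show ?thesis
    unfolding noma_feasible_def R0_NOMA_def R1_NOMA_def R2_NOMA_def
    by (simp add: ln_one_plus_divide_ge_iff)
qed (auto simp: noma_feasible_def)

lemma noma_feasible_total_power_ge:
  assumes "d > 0" and "eta > 0" and "sigma2 > 0"
    and "noma_feasible eta sigma2 d DL R x1 y1 x2 y2 P1 P2 x"
  shows "sigma2 * (exp R - 1) * (exp R * delta d x1 y1 x + delta d x2 y2 x) \<le> eta * (P1 + P2)"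
proof -
  define a where "a = exp R - 1"
  have user1: "a * (sigma2 * delta d x1 y1 x) \<le> eta * P1"
    and user2: "a * (eta * P1 + sigma2 * delta d x2 y2 x) \<le> eta * P2"
    using assms by (simp_all add: noma_feasible_iff a_def)
  have "sigma2 * a * (exp R * delta d x1 y1 x + delta d x2 y2 x)
      = exp R * (a * (sigma2 * delta d x1 y1 x)) + a * sigma2 * delta d x2 y2 x"
    by (simp add: algebra_simps)
  also have "\<dots> \<le> exp R * (eta * P1) + a * sigma2 * delta d x2 y2 x"
    using user1 by simp
  also have "\<dots> = eta * P1 + a * (eta * P1 + sigma2 * delta d x2 y2 x)"
    by (simp add: a_def algebra_simps)
  also have "\<dots> \<le> eta * (P1 + P2)"
    using user2 by (simp add: distrib_left)
  finally show ?thesis unfolding a_def .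
qed

lemma weighted_sq_dist_ge_at_weighted_mean:
  fixes u v a b z :: real
  assumes "u + v > 0"
  defines "m \<equiv> (u * a + v * b) / (u + v)"
  shows "u * (m - a)^2 + v * (m - b)^2 \<le> u * (z - a)^2 + v * (z - b)^2"
proof -
  have mean: "(u + v) * m = u * a + v * b"
    unfolding m_def using assms(1) by simp
  have "u * (z - a)^2 + v * (z - b)^2 - (u * (m - a)^2 + v * (m - b)^2)
      = (u + v) * (z^2 - m^2) - 2 * (z - m) * (u * a + v * b)"
    by (simp add: power2_eq_square algebra_simps)
  also have "\<dots> = (u + v) * (z^2 - m^2) - 2 * (z - m) * ((u + v) * m)"
    by (simp only: mean)
  also have "\<dots> = (u + v) * (z - m)^2"
    by (simp add: power2_eq_square algebra_simps)
  also have "\<dots> \<ge> 0"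
    using assms(1) by simp
  finally show ?thesis by simp
qed

lemma weighted_mean_mem_interval:
  fixes u v a b lo hi :: real
  assumes "u \<ge> 0" and "v \<ge> 0" and "u + v > 0"
    and "lo \<le> a" and "a \<le> hi" and "lo \<le> b" and "b \<le> hi"
  shows "lo \<le> (u * a + v * b) / (u + v)" and "(u * a + v * b) / (u + v) \<le> hi"
proof -
  have "(u + v) * lo \<le> u * a + v * b" and "u * a + v * b \<le> (u + v) * hi"
    using assms by (simp_all add: distrib_right add_mono mult_left_mono)
  with assms(3) show "lo \<le> (u * a + v * b) / (u + v)" and "(u * a + v * b) / (u + v) \<le> hi"
    by (simp_all add: pos_le_divide_eq pos_divide_le_eq mult.commute)
qed

lemma weighted_mean_closer_to_heavier:
  fixes u v a b :: real
  assumes "0 \<le> v" and "v \<le> u" and "0 < u"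
  defines "m \<equiv> (u * a + v * b) / (u + v)"
  shows "(m - a)^2 \<le> (m - b)^2"
proof -
  have "u + v \<noteq> 0" using assms(1,3) by simp
  then have "m - a = v * (b - a) / (u + v)" and "m - b = u * (a - b) / (u + v)"
    unfolding m_def by (simp_all add: field_simps)
  moreover have "(v * (b - a))^2 \<le> (u * (a - b))^2"
    using assms(1,2) by (simp add: power_mult_distrib power2_commute mult_right_mono power_mono)
  ultimately show ?thesis by (simp add: power_divide divide_right_mono)
qed

lemma noma_optimal_at_minimiser:
  assumes "d > 0" and "eta > 0" and "sigma2 > 0" and "R \<ge> 0"
    and "- DL / 2 \<le> x" and "x \<le> DL / 2"
    and user1_nearer: "delta d x1 y1 x \<le> delta d x2 y2 x"
    and minimiser: "\<And>z. exp R * delta d x1 y1 x + delta d x2 y2 x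
                        \<le> exp R * delta d x1 y1 z + delta d x2 y2 z"
    and P1_eq: "P1 = sigma2 / eta * (exp R - 1) * delta d x1 y1 x"
    and P2_eq: "P2 = (exp R - 1) * P1 + sigma2 / eta * (exp R - 1) * delta d x2 y2 x"
  shows "noma_optimal eta sigma2 d DL R x1 y1 x2 y2 P1 P2 x"
proof -
  define a where "a = exp R - 1"
  have "a \<ge> 0" using \<open>R \<ge> 0\<close> by (simp add: a_def)
  have tight1: "eta * P1 = a * (sigma2 * delta d x1 y1 x)"
    and tight2: "eta * P2 = a * (eta * P1 + sigma2 * delta d x2 y2 x)"
    using assms(2) by (simp_all add: P1_eq P2_eq a_def field_simps)
  have "delta d xm ym x \<ge> 0" for xm ym using delta_pos[OF \<open>d > 0\<close>] by (rule less_imp_le)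
  with assms(3) \<open>a \<ge> 0\<close> have "eta * P1 \<ge> 0" unfolding tight1 by simp
  with assms(2) have "P1 \<ge> 0" by (simp add: zero_le_mult_iff)
  with assms(2,3) \<open>a \<ge> 0\<close> \<open>delta d x2 y2 x \<ge> 0\<close> have "eta * P2 \<ge> 0" unfolding tight2 by simp
  with assms(2) have "P2 \<ge> 0" by (simp add: zero_le_mult_iff)
  have "a * (eta * P1 + sigma2 * delta d x1 y1 x) \<le> eta * P2"
    unfolding tight2 using user1_nearer assms(3) \<open>a \<ge> 0\<close> by (simp add: mult_left_mono)
  with tight1 tight2 \<open>P1 \<ge> 0\<close> \<open>P2 \<ge> 0\<close> assms(1-3,5,6)
  have feasible: "noma_feasible eta sigma2 d DL R x1 y1 x2 y2 P1 P2 x"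
    by (simp add: noma_feasible_iff a_def)
  have "P1 + P2 \<le> Q1 + Q2" if "noma_feasible eta sigma2 d DL R x1 y1 x2 y2 Q1 Q2 z" for Q1 Q2 z
  proof -
    have "eta * (P1 + P2) = exp R * (eta * P1) + a * sigma2 * delta d x2 y2 x"
      using tight2 by (simp add: a_def algebra_simps)
    also have "\<dots> = sigma2 * a * (exp R * delta d x1 y1 x + delta d x2 y2 x)"
      unfolding tight1 by (simp add: algebra_simps)
    also have "\<dots> \<le> sigma2 * a * (exp R * delta d x1 y1 z + delta d x2 y2 z)"
      using minimiser assms(3) \<open>a \<ge> 0\<close> by (simp add: mult_left_mono)
    also have "\<dots> \<le> eta * (Q1 + Q2)"
      using noma_feasible_total_power_ge[OF assms(1-3) that] by (simp add: a_def)
    finally show ?thesis using assms(2) by simp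
  qed
  with feasible show ?thesis by (simp add: noma_optimal_def)
qed

theorem lemma6:
  fixes eta sigma2 d DL R x1 y1 x2 y2 :: real
  assumes "d > 0" and "eta > 0" and "sigma2 > 0"
    and "- DL / 2 \<le> x1" and "x1 \<le> DL / 2"
    and "- DL / 2 \<le> x2" and "x2 \<le> DL / 2"
    and "y1^2 \<le> y2^2"
    and "R \<ge> 1 / 2"
  shows "let eps = sigma2 / eta * (exp R - 1);
             tau1 = eps * (y1^2 + d^2);
             tau2 = eps * (y2^2 + d^2);
             xs = x2 / (exp R + 1) + exp R * x1 / (exp R + 1);
             P1s = eps * (xs - x1)^2 + tau1;
             P2s = eps * eta / sigma2 * P1s + eps * (xs - x2)^2 + tau2
         in noma_optimal eta sigma2 d DL R x1 y1 x2 y2 P1s P2s xs"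
proof -
  define E where "E = exp R"
  define eps where "eps = sigma2 / eta * (E - 1)"
  define xs where "xs = (E * x1 + x2) / (E + 1)"
  have "E \<ge> 1" using assms(9) by (simp add: E_def)
  have xs_alt: "x2 / (E + 1) + E * x1 / (E + 1) = xs"
    by (simp add: xs_def add_divide_distrib)
  have "- DL / 2 \<le> xs" and "xs \<le> DL / 2"
    unfolding xs_def using assms(4-7) \<open>E \<ge> 1\<close>
      weighted_mean_mem_interval[of E 1 "- DL / 2" x1 "DL / 2" x2] by simp_all
  moreover have "delta d x1 y1 xs \<le> delta d x2 y2 xs"
    using weighted_mean_closer_to_heavier[of 1 E x1 x2] \<open>E \<ge> 1\<close> assms(8)
    by (simp add: delta_def xs_def)
  moreover have "E * delta d x1 y1 xs + delta d x2 y2 xs \<le> E * delta d x1 y1 z + delta d x2 y2 z" for z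
    using weighted_sq_dist_ge_at_weighted_mean[of E 1 x1 x2 z] \<open>E \<ge> 1\<close> assms(8)
    by (simp add: delta_def xs_def algebra_simps)
  ultimately have optimal: "noma_optimal eta sigma2 d DL R x1 y1 x2 y2 (eps * delta d x1 y1 xs)
      ((E - 1) * (eps * delta d x1 y1 xs) + eps * delta d x2 y2 xs) xs"
    using assms(9) unfolding E_def eps_def
    by (intro noma_optimal_at_minimiser[OF assms(1-3)]) simp_all
  have ratio: "eps * eta / sigma2 = E - 1"
    using assms(2,3) by (simp add: eps_def)
  have P2s: "eps * eta / sigma2 * (eps * delta d x1 y1 xs) + eps * (xs - x2)^2 + eps * (y2^2 + d^2)
      = (E - 1) * (eps * delta d x1 y1 xs) + eps * delta d x2 y2 xs"
    unfolding ratio by (simp add: delta_def algebra_simps)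
  have P1s: "eps * (xs - x1)^2 + eps * (y1^2 + d^2) = eps * delta d x1 y1 xs"
    by (simp add: delta_def algebra_simps)
  show ?thesis
    unfolding Let_def E_def[symmetric] eps_def[symmetric] xs_alt P1s P2s by (rule optimal)
qed

end
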